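(* Let $R$ be a nontrivial ring (with unity) and $\Sigma$ an alphabet. Then for every $L\in\mathrm{RevL}(\mathbb{F}_2,\Sigma)$, the characteristic series $\underline{L}$ of $L$ over $R$ belongs to $\mathrm{Rev}(R,\Sigma)$, and $L\in\mathrm{RevL}(R,\Sigma)$.
   Context: A ring is a semiring $(R,+,\cdot,0,1)$ whose additive monoid is an abelian group (not necessarily commutative multiplication); nontrivial means $0\neq1$. $\mathbb{F}_2$ is the two-element field. For a semiring $S$ and finite nonempty alphabet $\Sigma$, a series is a map $r\colon\Sigma^*\to S$ with value $(r,w)$ and support $\mathrm{supp}(r)=\{w\mid(r,w)\neq0\}$; the characteristic series $\underline{L}$ of $L\subseteq\Sigma^*$ over $S$ has coefficient $1$ on $L$ and $0$ elsewhere. A weighted automaton over $S$ and $\Sigma$ is $\mathcal{A}=(Q,\sigma,\iota,\tau)$ with $Q$ finite, $\sigma\colon Q\times\Sigma\times Q\to S$, $\iota,\tau\colon Q\to S$; a run on $w=a_1\cdots a_t$ is $q_0a_1q_1\cdots a_tq_t$ with all $\sigma(q_{k-1},a_k,q_k)\neq0$, of weight $\iota(q_0)\sigma(q_0,a_1,q_1)\cdots\sigma(q_{t-1},a_t,q_t)\tau(q_t)$, and $(\|\mathcal{A}\|,w)$ is the sum of weights of all runs on $w$. $\mathcal{A}$ is reversible if for all $p,p',q,q'\in Q$, $a\in\Sigma$: $\sigma(p,a,q)\neq0\neq\sigma(p,a,q')$ implies $q=q'$, and $\sigma(p,a,q)\neq0\neq\sigma(p',a,q)$ implies $p=p'$.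 $\mathrm{Rev}(S,\Sigma)$ is the set of series realised by reversible weighted automata over $S$ and $\Sigma$, and $\mathrm{RevL}(S,\Sigma)=\{\mathrm{supp}(r)\mid r\in\mathrm{Rev}(S,\Sigma)\}$. *)

theory Defs
  imports Main "HOL-Library.Z2"
begin

text \<open>Weighted automata over a semiring 'w (class semiring_1, multiplication not
  necessarily commutative) and an alphabet given by a finite type 'a (types are nonempty).\<close>

type_synonym ('a, 'w) series = "'a list \<Rightarrow> 'w"

definition supp :: "('a, 'w::zero) series \<Rightarrow> 'a list set" where
  "supp r = {w. r w \<noteq> 0}"

definition char_series :: "'a list set \<Rightarrow> ('a, 'w::{zero,one}) series" where
  "char_series L = (\<lambda>w. if w \<in> L then 1 else 0)"

definition is_run :: "nat set \<Rightarrow> (nat \<Rightarrow> 'a \<Rightarrow> nat \<Rightarrow> 'w::zero) \<Rightarrow> 'a list \<Rightarrow> nat list \<Rightarrow> bool" where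
  "is_run Q \<sigma> w qs \<longleftrightarrow> length qs = Suc (length w) \<and> set qs \<subseteq> Q \<and>
     (\<forall>k < length w. \<sigma> (qs ! k) (w ! k) (qs ! Suc k) \<noteq> 0)"

definition run_weight :: "(nat \<Rightarrow> 'a \<Rightarrow> nat \<Rightarrow> 'w::semiring_1) \<Rightarrow> (nat \<Rightarrow> 'w) \<Rightarrow> (nat \<Rightarrow> 'w)
    \<Rightarrow> 'a list \<Rightarrow> nat list \<Rightarrow> 'w" where
  "run_weight \<sigma> \<iota> \<tau> w qs =
     \<iota> (qs ! 0) * prod_list (map (\<lambda>k. \<sigma> (qs ! k) (w ! k) (qs ! Suc k)) [0..<length w])
       * \<tau> (qs ! length w)"

definition behaviour :: "nat set \<Rightarrow> (nat \<Rightarrow> 'a \<Rightarrow> nat \<Rightarrow> 'w::semiring_1) \<Rightarrow> (nat \<Rightarrow> 'w)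
    \<Rightarrow> (nat \<Rightarrow> 'w) \<Rightarrow> ('a, 'w) series" where
  "behaviour Q \<sigma> \<iota> \<tau> = (\<lambda>w. \<Sum>qs \<in> {qs. is_run Q \<sigma> w qs}. run_weight \<sigma> \<iota> \<tau> w qs)"

definition reversible :: "nat set \<Rightarrow> (nat \<Rightarrow> 'a \<Rightarrow> nat \<Rightarrow> 'w::zero) \<Rightarrow> bool" where
  "reversible Q \<sigma> \<longleftrightarrow>
     (\<forall>p\<in>Q. \<forall>q\<in>Q. \<forall>q'\<in>Q. \<forall>a. \<sigma> p a q \<noteq> 0 \<and> \<sigma> p a q' \<noteq> 0 \<longrightarrow> q = q') \<and>
     (\<forall>p\<in>Q. \<forall>p'\<in>Q. \<forall>q\<in>Q. \<forall>a. \<sigma> p a q \<noteq> 0 \<and> \<sigma> p' a q \<noteq> 0 \<longrightarrow> p = p')"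

text \<open>Rev(S, Sigma): the semiring S is given by the type 'w, the alphabet by the type 'a.\<close>
definition Rev :: "('a, 'w::semiring_1) series set" where
  "Rev = {r. \<exists>Q \<sigma> \<iota> \<tau>. finite Q \<and> reversible Q \<sigma> \<and> r = behaviour Q \<sigma> \<iota> \<tau>}"

definition RevL :: "('a, 'w::semiring_1) series set \<Rightarrow> 'a list set set" where
  "RevL R = supp ` R"

end

theory Submission
  imports Defs "HOL-Library.Nat_Bijection"
begin

text \<open>Over F_2 a word is accepted iff it has an odd number n of accepting runs. In a reversible
  automaton a run is determined by its first state, so the runs in a nonempty set S of runs on w
  move in lockstep: their k-th states form nonempty sets, which make up a run on w of a subset
  automaton whose states are nonempty sets of states. This is a bijection between such S and the
  runs of the subset automaton, and the subset automaton is again reversible provided a set may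
  only move when each of its states can. Weighting a set T initially by (-2)^(|T|-1) when all its
  states are initial, and finally by 1 when all are final, gives w the weight
  sum of (-2)^(|S|-1) over the nonempty sets S of accepting runs, which is (1 - (-1)^n)/2 formally
  and hence 1 or 0 in every ring according to the parity of n.\<close>

type_synonym ('a, 'w) transitions = "nat \<Rightarrow> 'a \<Rightarrow> nat \<Rightarrow> 'w"

lemma is_run_nth_mem:
  assumes "is_run Q \<sigma> w qs" and "k \<le> length w"
  shows "qs ! k \<in> Q"
  using assms unfolding is_run_def by (auto intro: nth_mem[THEN subsetD[rotated]])

lemma is_run_Nil: "is_run Q \<sigma> [] qs \<longleftrightarrow> (\<exists>p\<in>Q. qs = [p])"
  unfolding is_run_def by (auto simp: length_Suc_conv)

lemma is_run_Cons:
  "is_run Q \<sigma> (a # w) (p # qs) \<longleftrightarrow> p \<in> Q \<and> \<sigma> p a (qs ! 0) \<noteq> 0 \<and> is_run Q \<sigma> w qs"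
  unfolding is_run_def by (auto simp: All_less_Suc2)

lemma is_run_ConsE:
  assumes "is_run Q \<sigma> (a # w) qs"
  obtains p qs' where "qs = p # qs'" "p \<in> Q" "\<sigma> p a (qs' ! 0) \<noteq> 0" "is_run Q \<sigma> w qs'"
proof (cases qs)
  case Nil
  then show ?thesis using assms by (simp add: is_run_def)
next
  case (Cons p qs')
  then show ?thesis using assms that by (simp add: is_run_Cons)
qed

lemma finite_runs:
  assumes "finite Q"
  shows "finite {qs. is_run Q \<sigma> w qs}"
  by (rule finite_subset[OF _ finite_lists_length_eq[OF assms, of "Suc (length w)"]])
    (auto simp: is_run_def)

lemma reversible_run_eqI:
  assumes rev: "reversible Q \<sigma>"
  shows "is_run Q \<sigma> w qs \<Longrightarrow> is_run Q \<sigma> w qs' \<Longrightarrow> qs ! 0 = qs' ! 0 \<Longrightarrow> qs = qs'"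
proof (induction w arbitrary: qs qs')
  case Nil
  then show ?case by (auto simp: is_run_Nil)
next
  case (Cons a w)
  obtain p r where qs: "qs = p # r" "p \<in> Q" "\<sigma> p a (r ! 0) \<noteq> 0" "is_run Q \<sigma> w r"
    using Cons.prems(1) by (rule is_run_ConsE)
  obtain p' r' where qs': "qs' = p' # r'" "\<sigma> p' a (r' ! 0) \<noteq> 0" "is_run Q \<sigma> w r'"
    using Cons.prems(2) by (rule is_run_ConsE)
  have "p = p'" using Cons.prems(3) qs qs' by simp
  moreover have "r ! 0 \<in> Q" "r' ! 0 \<in> Q" using qs qs' by (auto intro: is_run_nth_mem)
  ultimately have "r ! 0 = r' ! 0" using rev qs qs' unfolding reversible_def by blast
  then show ?case using Cons.IH qs qs' \<open>p = p'\<close> by simp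
qed

lemma inj_on_run_start:
  assumes "reversible Q \<sigma>"
  shows "inj_on (\<lambda>qs. qs ! 0) {qs. is_run Q \<sigma> w qs}"
  using reversible_run_eqI[OF assms] by (auto intro: inj_onI)

definition accepting_runs :: "nat set \<Rightarrow> ('a, 'w::zero) transitions \<Rightarrow> (nat \<Rightarrow> 'w) \<Rightarrow> (nat \<Rightarrow> 'w)
    \<Rightarrow> 'a list \<Rightarrow> nat list set" where
  "accepting_runs Q \<sigma> \<iota> \<tau> w = {qs. is_run Q \<sigma> w qs \<and> \<iota> (qs ! 0) \<noteq> 0 \<and> \<tau> (qs ! length w) \<noteq> 0}"

lemma behaviour_unit_weights:
  fixes \<sigma> :: "('a, 'w::semiring_1) transitions"
  assumes "\<And>p a q. \<sigma> p a q \<noteq> 0 \<Longrightarrow> \<sigma> p a q = 1"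
  shows "behaviour Q \<sigma> \<iota> \<tau> w = (\<Sum>qs | is_run Q \<sigma> w qs. \<iota> (qs ! 0) * \<tau> (qs ! length w))"
  unfolding behaviour_def
proof (rule sum.cong)
  fix qs assume "qs \<in> {qs. is_run Q \<sigma> w qs}"
  then have "map (\<lambda>k. \<sigma> (qs ! k) (w ! k) (qs ! Suc k)) [0..<length w] = replicate (length w) 1"
    by (auto simp: is_run_def assms intro: nth_equalityI)
  then show "run_weight \<sigma> \<iota> \<tau> w qs = \<iota> (qs ! 0) * \<tau> (qs ! length w)"
    unfolding run_weight_def by simp
qed simp

lemma behaviour_eq_card_accepting_runs:
  fixes \<sigma> :: "('a, 'w::semiring_1) transitions"
  assumes "finite Q" and "\<And>p a q. \<sigma> p a q \<in> {0, 1}" and "\<And>p. \<iota> p \<in> {0, 1}" and "\<And>q. \<tau> q \<in> {0, 1}"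
  shows "behaviour Q \<sigma> \<iota> \<tau> w = of_nat (card (accepting_runs Q \<sigma> \<iota> \<tau> w))"
proof -
  have "behaviour Q \<sigma> \<iota> \<tau> w = (\<Sum>qs | is_run Q \<sigma> w qs. \<iota> (qs ! 0) * \<tau> (qs ! length w))"
    using assms(2) by (intro behaviour_unit_weights) blast
  also have "\<dots> = (\<Sum>qs | is_run Q \<sigma> w qs. of_bool (\<iota> (qs ! 0) \<noteq> 0 \<and> \<tau> (qs ! length w) \<noteq> 0))"
  proof -
    have "\<iota> p * \<tau> q = of_bool (\<iota> p \<noteq> 0 \<and> \<tau> q \<noteq> 0)" for p q
      using assms(3)[of p] assms(4)[of q] by auto
    then show ?thesis by simp
  qed
  also have "\<dots> = of_nat (card ({qs. is_run Q \<sigma> w qs} \<inter> {qs. \<iota> (qs ! 0) \<noteq> 0 \<and> \<tau> (qs ! length w) \<noteq> 0}))"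
    using finite_runs[OF assms(1), of \<sigma> w] by simp
  also have "{qs. is_run Q \<sigma> w qs} \<inter> {qs. \<iota> (qs ! 0) \<noteq> 0 \<and> \<tau> (qs ! length w) \<noteq> 0} = accepting_runs Q \<sigma> \<iota> \<tau> w"
    by (auto simp: accepting_runs_def)
  finally show ?thesis .
qed

lemma of_nat_bit: "(of_nat n :: bit) = of_bool (odd n)"
  by (induction n) auto

lemma behaviour_bit_eq_parity:
  fixes \<sigma> :: "('a, bit) transitions"
  assumes "finite Q"
  shows "behaviour Q \<sigma> \<iota> \<tau> w = of_bool (odd (card (accepting_runs Q \<sigma> \<iota> \<tau> w)))"
proof -
  have "behaviour Q \<sigma> \<iota> \<tau> w = of_nat (card (accepting_runs Q \<sigma> \<iota> \<tau> w))"
    by (rule behaviour_eq_card_accepting_runs[OF assms]) auto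
  then show ?thesis by (simp add: of_nat_bit)
qed

lemma sum_Pow_power_card:
  fixes x :: "'r::semiring_1"
  assumes "finite K"
  shows "(\<Sum>S\<in>Pow K. x ^ card S) = (1 + x) ^ card K"
  using assms
proof (induction K rule: finite_induct)
  case (insert a K)
  have "(\<Sum>S\<in>Pow (insert a K). x ^ card S) = (\<Sum>S\<in>Pow K. x ^ card S) + (\<Sum>S\<in>insert a ` Pow K. x ^ card S)"
    unfolding Pow_insert using insert.hyps by (intro sum.union_disjoint) auto
  also have "(\<Sum>S\<in>insert a ` Pow K. x ^ card S) = (\<Sum>S\<in>Pow K. x * x ^ card S)"
    using insert.hyps by (subst sum.reindex) (auto intro!: inj_onI sum.cong simp: finite_subset card_insert_if)
  also have "\<dots> = x * (1 + x) ^ card K"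
    by (simp add: insert.IH flip: sum_distrib_left)
  finally show ?case using insert by (simp add: distrib_right)
qed simp

lemma sum_nonempty_subsets_neg_two_power:
  assumes "finite K"
  shows "(\<Sum>S\<in>Pow K - {{}}. (-2::'r::ring_1) ^ (card S - 1)) = of_bool (odd (card K))"
  using assms
proof (induction K rule: finite_induct)
  case (insert a K)
  have "Pow (insert a K) - {{}} = (Pow K - {{}}) \<union> insert a ` Pow K"
    by (auto simp: Pow_insert)
  then have "(\<Sum>S\<in>Pow (insert a K) - {{}}. (-2::'r) ^ (card S - 1))
      = (\<Sum>S\<in>Pow K - {{}}. (-2) ^ (card S - 1)) + (\<Sum>S\<in>insert a ` Pow K. (-2) ^ (card S - 1))"
    using insert.hyps by (simp only:) (rule sum.union_disjoint; auto)
  also have "(\<Sum>S\<in>insert a ` Pow K. (-2::'r) ^ (card S - 1)) = (\<Sum>S\<in>Pow K. (-2) ^ card S)"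
    using insert.hyps by (subst sum.reindex) (auto intro!: inj_onI sum.cong simp: finite_subset card_insert_if)
  also have "\<dots> = (-1) ^ card K"
    using sum_Pow_power_card[OF insert.hyps(1), of "-2::'r"] by simp
  finally show ?case using insert by simp
qed simp

definition successors :: "nat set \<Rightarrow> ('a, 'w::zero) transitions \<Rightarrow> 'a \<Rightarrow> nat set \<Rightarrow> nat set" where
  "successors Q \<sigma> a T = {q \<in> Q. \<exists>p\<in>T. \<sigma> p a q \<noteq> 0}"

definition subset_states :: "nat set \<Rightarrow> nat set" where
  "subset_states Q = {m. set_decode m \<subseteq> Q \<and> set_decode m \<noteq> {}}"

definition subset_trans :: "nat set \<Rightarrow> ('a, 'w::zero) transitions \<Rightarrow> ('a, 'r::zero_neq_one) transitions" where
  "subset_trans Q \<sigma> m a n = of_bool ((\<forall>p\<in>set_decode m. \<exists>q\<in>Q. \<sigma> p a q \<noteq> 0)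
     \<and> set_decode n = successors Q \<sigma> a (set_decode m))"

definition subset_init :: "(nat \<Rightarrow> 'w::zero) \<Rightarrow> nat \<Rightarrow> 'r::ring_1" where
  "subset_init \<iota> m = (if \<forall>p\<in>set_decode m. \<iota> p \<noteq> 0 then (-2) ^ (card (set_decode m) - 1) else 0)"

definition subset_final :: "(nat \<Rightarrow> 'w::zero) \<Rightarrow> nat \<Rightarrow> 'r::zero_neq_one" where
  "subset_final \<tau> m = of_bool (\<forall>q\<in>set_decode m. \<tau> q \<noteq> 0)"

lemma finite_subset_states:
  assumes "finite Q"
  shows "finite (subset_states Q)"
proof (rule finite_subset)
  show "subset_states Q \<subseteq> set_encode ` Pow Q"
    unfolding subset_states_def by clarify (metis PowI image_eqI set_decode_inverse)
qed (use assms in simp)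

lemma subset_trans_nonzero_iff:
  "(subset_trans Q \<sigma> m a n :: 'r::zero_neq_one) \<noteq> 0 \<longleftrightarrow>
     (\<forall>p\<in>set_decode m. \<exists>q\<in>Q. \<sigma> p a q \<noteq> 0) \<and> set_decode n = successors Q \<sigma> a (set_decode m)"
  by (simp add: subset_trans_def)

lemma reversible_successors_subset:
  assumes rev: "reversible Q \<sigma>" and "T \<subseteq> Q" "T' \<subseteq> Q"
    and total: "\<forall>p\<in>T. \<exists>q\<in>Q. \<sigma> p a q \<noteq> 0"
    and succ: "successors Q \<sigma> a T \<subseteq> successors Q \<sigma> a T'"
  shows "T \<subseteq> T'"
proof
  fix p assume "p \<in> T"
  then obtain q where q: "q \<in> Q" "\<sigma> p a q \<noteq> 0" using total by blast
  then have "q \<in> successors Q \<sigma> a T'" using succ \<open>p \<in> T\<close> unfolding successors_def by blast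
  then obtain p' where "p' \<in> T'" "\<sigma> p' a q \<noteq> 0" unfolding successors_def by blast
  then show "p \<in> T'" using rev q \<open>p \<in> T\<close> assms(2,3) unfolding reversible_def by blast
qed

lemma reversible_subset_automaton:
  assumes rev: "reversible Q \<sigma>"
  shows "reversible (subset_states Q) (subset_trans Q \<sigma> :: ('a, 'r::zero_neq_one) transitions)"
proof -
  have forward: "n = n'"
    if "(subset_trans Q \<sigma> m a n :: 'r) \<noteq> 0" "(subset_trans Q \<sigma> m a n' :: 'r) \<noteq> 0" for m n n' a
  proof -
    have "set_decode n = set_decode n'"
      using that by (simp add: subset_trans_nonzero_iff)
    then show ?thesis by (metis set_decode_inverse)
  qed
  have backward: "m = m'"
    if states: "m \<in> subset_states Q" "m' \<in> subset_states Q"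
      and trans: "(subset_trans Q \<sigma> m a n :: 'r) \<noteq> 0" "(subset_trans Q \<sigma> m' a n :: 'r) \<noteq> 0"
    for m m' n a
  proof -
    have sub: "set_decode m \<subseteq> Q" "set_decode m' \<subseteq> Q"
      using states by (simp_all add: subset_states_def)
    have total: "\<forall>p\<in>set_decode m. \<exists>q\<in>Q. \<sigma> p a q \<noteq> 0" "\<forall>p\<in>set_decode m'. \<exists>q\<in>Q. \<sigma> p a q \<noteq> 0"
      and succ: "successors Q \<sigma> a (set_decode m) = successors Q \<sigma> a (set_decode m')"
      using trans by (simp_all add: subset_trans_nonzero_iff)
    have "set_decode m \<subseteq> set_decode m'"
      using reversible_successors_subset[OF rev sub total(1)] succ by simp
    moreover have "set_decode m' \<subseteq> set_decode m"
      using reversible_successors_subset[OF rev sub(2,1) total(2)] succ by simp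
    ultimately have "set_decode m = set_decode m'" by (rule subset_antisym)
    then show ?thesis by (metis set_decode_inverse)
  qed
  show ?thesis unfolding reversible_def using forward backward by blast
qed

definition subset_trace :: "nat \<Rightarrow> nat list set \<Rightarrow> nat list" where
  "subset_trace n S = map (\<lambda>k. set_encode ((\<lambda>qs. qs ! k) ` S)) [0..<Suc n]"

lemma successors_nth_image:
  assumes rev: "reversible Q \<sigma>" and runs: "\<forall>qs\<in>S. is_run Q \<sigma> w qs" and "k < length w"
  shows "successors Q \<sigma> (w ! k) ((\<lambda>qs. qs ! k) ` S) = (\<lambda>qs. qs ! Suc k) ` S"
proof (intro equalityI subsetI)
  fix q assume "q \<in> successors Q \<sigma> (w ! k) ((\<lambda>qs. qs ! k) ` S)"
  then obtain qs where qs: "qs \<in> S" "q \<in> Q" "\<sigma> (qs ! k) (w ! k) q \<noteq> 0"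
    unfolding successors_def by blast
  have "qs ! k \<in> Q" "qs ! Suc k \<in> Q" "\<sigma> (qs ! k) (w ! k) (qs ! Suc k) \<noteq> 0"
    using runs qs(1) \<open>k < length w\<close> by (auto intro: is_run_nth_mem simp: is_run_def)
  then have "q = qs ! Suc k" using rev qs unfolding reversible_def by blast
  then show "q \<in> (\<lambda>qs. qs ! Suc k) ` S" using qs(1) by blast
next
  fix q assume "q \<in> (\<lambda>qs. qs ! Suc k) ` S"
  then obtain qs where "qs \<in> S" "q = qs ! Suc k" by blast
  then show "q \<in> successors Q \<sigma> (w ! k) ((\<lambda>qs. qs ! k) ` S)"
    using runs \<open>k < length w\<close> unfolding successors_def
    by (auto intro: is_run_nth_mem simp: is_run_def)
qed

lemma is_run_subset_trace:
  assumes rev: "reversible Q \<sigma>" and "finite S" "S \<noteq> {}" and runs: "\<forall>qs\<in>S. is_run Q \<sigma> w qs"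
  shows "is_run (subset_states Q) (subset_trans Q \<sigma> :: ('a, 'r::zero_neq_one) transitions) w
    (subset_trace (length w) S)"
  unfolding is_run_def
proof (intro conjI allI impI)
  have decode: "set_decode (subset_trace (length w) S ! k) = (\<lambda>qs. qs ! k) ` S" if "k \<le> length w" for k
    using that \<open>finite S\<close> by (simp add: subset_trace_def del: upt_Suc)
  show "length (subset_trace (length w) S) = Suc (length w)"
    by (simp add: subset_trace_def)
  show "set (subset_trace (length w) S) \<subseteq> subset_states Q"
    using runs \<open>S \<noteq> {}\<close> \<open>finite S\<close> unfolding subset_trace_def subset_states_def
    by (auto simp del: upt_Suc) (meson is_run_nth_mem less_Suc_eq_le)
  fix k assume "k < length w"
  then show "(subset_trans Q \<sigma> (subset_trace (length w) S ! k) (w ! k)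
      (subset_trace (length w) S ! Suc k) :: 'r) \<noteq> 0"
    unfolding subset_trans_nonzero_iff using decode successors_nth_image[OF rev runs] runs
    by (auto intro!: bexI[of _ "_ ! Suc k"] intro: is_run_nth_mem simp: is_run_def)
qed

lemma subset_run_start_has_run:
  "is_run (subset_states Q) (subset_trans Q \<sigma> :: ('a, 'r::zero_neq_one) transitions) w ms \<Longrightarrow>
    p \<in> set_decode (ms ! 0) \<Longrightarrow> \<exists>qs. is_run Q \<sigma> w qs \<and> qs ! 0 = p"
proof (induction w arbitrary: ms p)
  case Nil
  then have "p \<in> Q" by (auto simp: is_run_Nil subset_states_def)
  then show ?case by (auto simp: is_run_Nil)
next
  case (Cons a w)
  obtain m ms' where ms: "ms = m # ms'" "(subset_trans Q \<sigma> m a (ms' ! 0) :: 'r) \<noteq> 0"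
    "is_run (subset_states Q) (subset_trans Q \<sigma> :: ('a, 'r) transitions) w ms'"
    using Cons.prems(1) by (rule is_run_ConsE)
  have "p \<in> set_decode m" "set_decode m \<subseteq> Q"
    using Cons.prems ms(1) is_run_nth_mem[of _ _ _ ms 0] by (auto simp: subset_states_def)
  moreover obtain q where "q \<in> Q" "\<sigma> p a q \<noteq> 0" "q \<in> set_decode (ms' ! 0)"
    using ms(2) \<open>p \<in> set_decode m\<close> unfolding subset_trans_nonzero_iff successors_def by blast
  moreover obtain qs where "is_run Q \<sigma> w qs" "qs ! 0 = q"
    using Cons.IH[OF ms(3) \<open>q \<in> set_decode (ms' ! 0)\<close>] by blast
  ultimately have "is_run Q \<sigma> (a # w) (p # qs)" by (auto simp: is_run_Cons)
  then show ?case by auto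
qed

lemma subset_trace_weight:
  assumes rev: "reversible Q \<sigma>" and "finite S" and runs: "\<forall>qs\<in>S. is_run Q \<sigma> w qs"
  shows "subset_init \<iota> (subset_trace (length w) S ! 0) * subset_final \<tau> (subset_trace (length w) S ! length w)
    = (if S \<subseteq> accepting_runs Q \<sigma> \<iota> \<tau> w then (-2) ^ (card S - 1) else (0::'r::ring_1))"
proof -
  have "inj_on (\<lambda>qs. qs ! 0) S"
    using runs by (blast intro: inj_on_subset[OF inj_on_run_start[OF rev]])
  then have "card ((\<lambda>qs. qs ! 0) ` S) = card S" by (rule card_image)
  moreover have "S \<subseteq> accepting_runs Q \<sigma> \<iota> \<tau> w \<longleftrightarrow> (\<forall>qs\<in>S. \<iota> (qs ! 0) \<noteq> 0) \<and> (\<forall>qs\<in>S. \<tau> (qs ! length w) \<noteq> 0)"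
    using runs unfolding accepting_runs_def by auto
  ultimately show ?thesis
    using \<open>finite S\<close> by (simp add: subset_trace_def subset_init_def subset_final_def nth_append del: upt_Suc)
qed

lemma bij_betw_subset_trace:
  assumes "finite Q" and rev: "reversible Q \<sigma>"
  shows "bij_betw (subset_trace (length w)) (Pow {qs. is_run Q \<sigma> w qs} - {{}})
    {ms. is_run (subset_states Q) (subset_trans Q \<sigma> :: ('a, 'r::zero_neq_one) transitions) w ms}"
    (is "bij_betw ?trace ?A ?B")
proof -
  let ?R = "{qs. is_run Q \<sigma> w qs}"
  have finite_runs_subset: "finite S" if "S \<subseteq> ?R" for S
    using that finite_runs[OF \<open>finite Q\<close>] by (rule finite_subset)
  have head: "?trace S ! 0 = set_encode ((\<lambda>qs. qs ! 0) ` S)" for S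
    by (simp add: subset_trace_def del: upt_Suc)
  have "inj_on ?trace ?A"
  proof (rule inj_onI)
    fix S S' assume S: "S \<in> ?A" "S' \<in> ?A" and "?trace S = ?trace S'"
    then have "set_encode ((\<lambda>qs. qs ! 0) ` S) = set_encode ((\<lambda>qs. qs ! 0) ` S')"
      using head by metis
    then have "(\<lambda>qs. qs ! 0) ` S = (\<lambda>qs. qs ! 0) ` S'"
      using S finite_runs_subset by (simp add: set_encode_eq)
    then show "S = S'"
      using S inj_on_image_eq_iff[OF inj_on_run_start[OF rev]] by blast
  qed
  moreover have "?trace ` ?A = ?B"
  proof (intro equalityI subsetI)
    fix ms assume "ms \<in> ?trace ` ?A"
    then show "ms \<in> ?B"
      using is_run_subset_trace[OF rev] finite_runs_subset by auto
  next
    fix ms assume "ms \<in> ?B"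
    then have ms: "is_run (subset_states Q) (subset_trans Q \<sigma> :: ('a, 'r) transitions) w ms" by simp
    define S where "S = {qs \<in> ?R. qs ! 0 \<in> set_decode (ms ! 0)}"
    have starts: "(\<lambda>qs. qs ! 0) ` S = set_decode (ms ! 0)"
      using subset_run_start_has_run[OF ms] unfolding S_def by force
    have "set_decode (ms ! 0) \<noteq> {}"
      using is_run_nth_mem[OF ms, of 0] by (simp add: subset_states_def)
    then have "S \<in> ?A" using starts unfolding S_def by auto
    moreover have "?trace S = ms"
    proof (rule reversible_run_eqI[OF reversible_subset_automaton[OF rev] _ ms])
      show "is_run (subset_states Q) (subset_trans Q \<sigma> :: ('a, 'r) transitions) w (?trace S)"
        using is_run_subset_trace[OF rev] \<open>S \<in> ?A\<close> finite_runs_subset by auto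
      show "?trace S ! 0 = ms ! 0" using head starts by simp
    qed
    ultimately show "ms \<in> ?trace ` ?A" by blast
  qed
  ultimately show ?thesis unfolding bij_betw_def ..
qed

lemma behaviour_subset_automaton:
  assumes "finite Q" and rev: "reversible Q \<sigma>"
  shows "(behaviour (subset_states Q) (subset_trans Q \<sigma>) (subset_init \<iota>) (subset_final \<tau>) w :: 'r::ring_1)
    = of_bool (odd (card (accepting_runs Q \<sigma> \<iota> \<tau> w)))"
proof -
  let ?R = "{qs. is_run Q \<sigma> w qs}"
  let ?K = "accepting_runs Q \<sigma> \<iota> \<tau> w"
  let ?trace = "subset_trace (length w)"
  have K_runs: "?K \<subseteq> ?R"
    by (auto simp: accepting_runs_def)
  then have finite_K: "finite ?K"
    using finite_runs[OF \<open>finite Q\<close>, of \<sigma> w] by (rule finite_subset)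
  have "(behaviour (subset_states Q) (subset_trans Q \<sigma>) (subset_init \<iota>) (subset_final \<tau>) w :: 'r)
      = (\<Sum>ms | is_run (subset_states Q) (subset_trans Q \<sigma> :: ('a, 'r) transitions) w ms.
           subset_init \<iota> (ms ! 0) * subset_final \<tau> (ms ! length w))"
    by (rule behaviour_unit_weights) (simp add: subset_trans_def)
  also have "\<dots> = (\<Sum>S\<in>Pow ?R - {{}}. subset_init \<iota> (?trace S ! 0) * subset_final \<tau> (?trace S ! length w))"
    by (rule sum.reindex_bij_betw[OF bij_betw_subset_trace[OF assms], symmetric])
  also have "\<dots> = (\<Sum>S\<in>Pow ?R - {{}}. if S \<subseteq> ?K then (-2) ^ (card S - 1) else 0)"
    using finite_runs[OF \<open>finite Q\<close>, of \<sigma> w]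
    by (intro sum.cong refl subset_trace_weight[OF rev]) (auto intro: finite_subset)
  also have "\<dots> = (\<Sum>S\<in>Pow ?K - {{}}. (-2) ^ (card S - 1))"
  proof -
    have "{S \<in> Pow ?R - {{}}. S \<subseteq> ?K} = Pow ?K - {{}}"
      using K_runs by blast
    then show ?thesis
      using finite_runs[OF \<open>finite Q\<close>, of \<sigma> w] by (simp add: sum.inter_filter[symmetric])
  qed
  also have "\<dots> = of_bool (odd (card ?K))"
    using finite_K by (rule sum_nonempty_subsets_neg_two_power)
  finally show ?thesis .
qed

lemma supp_char_series: "supp (char_series L :: ('a, 'w::zero_neq_one) series) = L"
  by (simp add: supp_def char_series_def)

theorem lemma2:
  fixes L :: "'a::finite list set"
  assumes "L \<in> RevL (Rev :: ('a, bit) series set)"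
  shows "(char_series L :: ('a, 'r::ring_1) series) \<in> Rev
       \<and> L \<in> RevL (Rev :: ('a, 'r) series set)"
proof -
  obtain Q and \<sigma> :: "('a, bit) transitions" and \<iota> \<tau> where
    "finite Q" and rev: "reversible Q \<sigma>" and L: "L = supp (behaviour Q \<sigma> \<iota> \<tau>)"
    using assms unfolding RevL_def Rev_def by blast
  have "char_series L = (behaviour (subset_states Q) (subset_trans Q \<sigma>) (subset_init \<iota>) (subset_final \<tau>)
      :: ('a, 'r) series)"
    using \<open>finite Q\<close> rev
    by (auto simp: L supp_def char_series_def behaviour_bit_eq_parity behaviour_subset_automaton)
  then have "(char_series L :: ('a, 'r) series) \<in> Rev"
    unfolding Rev_def using finite_subset_states[OF \<open>finite Q\<close>] reversible_subset_automaton[OF rev] by blast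
  moreover from this have "L \<in> RevL (Rev :: ('a, 'r) series set)"
    unfolding RevL_def by (metis image_eqI supp_char_series)
  ultimately show ?thesis ..
qed

end
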